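(* Let $q>0$. The following statements are equivalent: (i) the weight $w_q$ is unique; (ii) $w_q(\mathbf m)=1$ for every proper loop $\mathbf m$ for $q$; (iii) $w_q(\mathbf m)=w_q(\mathbf n)$ for all non-trivial proper loops $\mathbf m,\mathbf n$ for $q$.
   Context: Let $q>0$. For $k\ge0$ and $\mathbf m=(m_0,\dots,m_k)\in\mathbb Z^{k+1}$ put $\mathbf m_j=(m_0,\dots,m_j)$; define $c(q,\mathbf m_0)=m_0$ and $c(q,\mathbf m_j)=m_j+\frac{1}{q\,c(q,\mathbf m_{j-1})}$ for $1\le j\le k$. $\mathbf m$ is a path for $q$ of length $k$ if $c(q,\mathbf m_j)\ne0$ for $0\le j\le k-1$; it is proper if $m_j\ne0$ for $0\le j\le k-1$. The weight of a path is $w_q(\mathbf m)=q^{k/2}\prod_{j=0}^{k-1}|c(q,\mathbf m_j)|$ (and $1$ if $k=0$). A loop is a path with $c(q,\mathbf m)=0$; the trivial loop is $(0)$. The weight $w_q$ is unique if $w_q(\mathbf m)=w_q(\mathbf n)$ for all paths $\mathbf m,\mathbf n$ for $q$ with $c(q,\mathbf m)=c(q,\mathbf n)$. *)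

theory Defs
  imports Complex_Main
begin

text \<open>A sequence m = (m_0,...,m_k) is an int list of length k+1.
  cseq q m j = c(q, m_j) for j < length m.\<close>
fun cseq :: "real \<Rightarrow> int list \<Rightarrow> nat \<Rightarrow> real" where
  "cseq q m 0 = real_of_int (m ! 0)"
| "cseq q m (Suc j) = real_of_int (m ! Suc j) + 1 / (q * cseq q m j)"

definition cval :: "real \<Rightarrow> int list \<Rightarrow> real" where
  "cval q m = cseq q m (length m - 1)"

definition is_path :: "real \<Rightarrow> int list \<Rightarrow> bool" where
  "is_path q m \<longleftrightarrow> m \<noteq> [] \<and> (\<forall>j < length m - 1. cseq q m j \<noteq> 0)"

definition is_proper :: "int list \<Rightarrow> bool" where
  "is_proper m \<longleftrightarrow> (\<forall>j < length m - 1. m ! j \<noteq> 0)"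

definition weight :: "real \<Rightarrow> int list \<Rightarrow> real" where
  "weight q m = q powr (real (length m - 1) / 2) * (\<Prod>j < length m - 1. \<bar>cseq q m j\<bar>)"

definition is_loop :: "real \<Rightarrow> int list \<Rightarrow> bool" where
  "is_loop q m \<longleftrightarrow> is_path q m \<and> cval q m = 0"

definition trivial_loop :: "int list" where
  "trivial_loop = [0]"

definition weight_unique :: "real \<Rightarrow> bool" where
  "weight_unique q \<longleftrightarrow> (\<forall>m n. is_path q m \<and> is_path q n \<and> cval q m = cval q n
      \<longrightarrow> weight q m = weight q n)"

end

theory Submission
  imports Defs "HOL-Analysis.Product_Vector"
begin

text \<open>Write the recursion for c(q, m) projectively: a pair (x, y) stands for the ratio x / y,
  and the letter a acts by the matrix M_a = q^(-1/2) [[a q, 1], [q, 0]] of determinant -1. If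
  (x, y) is the image of (1, 0) under the word m, then c(q, m) = x / y and w(m) = |y| / sqrt q,
  so paths, loops and weights can be read off these vectors. The matrices satisfy
  M_b M_0 M_a = M_(a+b) and M_0 M_(-a) M_0 M_a = 1.

  If every proper loop has weight 1, then every word sending (1, 0) to some (l, 0) has |l| = 1:
  interior zeros can be merged away, after which the shortest prefix that is a loop is proper and
  the rest of the word is handled by induction. Two paths m, n with the same value give such a word,
  m followed by the inverse of n, with |l| = w(m) / w(n); so the weight is unique. Conversely,
  gluing a proper loop of weight w to itself (or to its negative) through a 0 and merging gives a
  non-trivial proper loop of weight w^2, so if all non-trivial proper loops have the same weight
  then w^2 = w, i.e. w = 1.\<close>

definition step :: "real \<Rightarrow> int \<Rightarrow> real \<times> real \<Rightarrow> real \<times> real" where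
  "step q a w = ((of_int a * q * fst w + snd w) / sqrt q, sqrt q * fst w)"

definition vec :: "real \<Rightarrow> int list \<Rightarrow> real \<times> real" where
  "vec q s = fold (step q) s (1, 0)"

lemma step_scaleR: "step q a (c *\<^sub>R w) = c *\<^sub>R step q a w"
  by (simp add: step_def field_simps)

lemma fold_step_scaleR: "fold (step q) s (c *\<^sub>R w) = c *\<^sub>R fold (step q) s w"
  by (induction s arbitrary: w) (simp_all add: step_scaleR)

lemma step_zero_merge:
  assumes "q > 0"
  shows "step q b (step q 0 (step q a w)) = step q (a + b) w"
  using assms by (simp add: step_def field_simps) (simp flip: mult.assoc)

lemma step_zero_cancel:
  assumes "q > 0"
  shows "step q 0 (step q (- a) (step q 0 (step q a w))) = w"
  using assms by (simp add: step_def field_simps)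

lemma step_uminus: "step q (- a) (x, - y) = - (fst (step q a (x, y)), - snd (step q a (x, y)))"
  by (simp add: step_def add_divide_distrib diff_divide_distrib)

lemma fold_step_uminus:
  "fold (step q) (map uminus s) (x, - y) =
     (-1) ^ length s *\<^sub>R (fst (fold (step q) s (x, y)), - snd (fold (step q) s (x, y)))"
proof (induction s arbitrary: x y)
  case (Cons a s)
  obtain x' y' where xy: "step q a (x, y) = (x', y')" by fastforce
  have "fold (step q) (map uminus (a # s)) (x, - y) = fold (step q) (map uminus s) ((-1) *\<^sub>R (x', - y'))"
    using step_uminus[of q a x y] by (simp add: xy)
  also have "\<dots> = (-1) *\<^sub>R fold (step q) (map uminus s) (x', - y')"
    by (rule fold_step_scaleR)
  finally show ?case using Cons.IH by (simp add: xy)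
qed simp

lemma vec_snoc: "vec q (s @ [a]) = step q a (vec q s)"
  by (simp add: vec_def)

lemma snd_vec_snoc: "snd (vec q (s @ [a])) = sqrt q * fst (vec q s)"
  by (simp add: vec_snoc step_def)

lemma vec_singleton: "q > 0 \<Longrightarrow> vec q [a] = (of_int a * sqrt q, sqrt q)"
  by (simp add: vec_def step_def field_simps real_div_sqrt)

lemma vec_uminus: "vec q (map uminus s) = (-1) ^ length s *\<^sub>R (fst (vec q s), - snd (vec q s))"
  using fold_step_uminus[of q s 1 0] by (simp add: vec_def)

lemma vec_Cons_zero: "q > 0 \<Longrightarrow> vec q (0 # a # r) = vec q r"
  by (simp add: vec_def step_def)

lemma vec_merge_zero: "q > 0 \<Longrightarrow> vec q (xs @ a # 0 # b # ys) = vec q (xs @ (a + b) # ys)"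
  by (simp add: vec_def step_zero_merge)

lemma vec_after_loop:
  "fst (vec q t) = 0 \<Longrightarrow> vec q (t @ a # r) = (snd (vec q t) / sqrt q) *\<^sub>R vec q r"
  by (simp add: vec_def step_def fold_step_scaleR[symmetric])

lemma cseq_append: "j < length s \<Longrightarrow> cseq q (s @ t) j = cseq q s j"
  by (induction j) (simp_all add: nth_append)

lemma cval_snoc: "s \<noteq> [] \<Longrightarrow> cval q (s @ [a]) = of_int a + 1 / (q * cval q s)"
  by (cases "length s") (simp_all add: cval_def cseq_append nth_append)

lemma is_path_snoc: "s \<noteq> [] \<Longrightarrow> is_path q (s @ [a]) \<longleftrightarrow> is_path q s \<and> cval q s \<noteq> 0"
  by (cases "length s") (auto simp: is_path_def cval_def cseq_append less_Suc_eq)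

lemma weight_singleton: "q \<noteq> 0 \<Longrightarrow> weight q [a] = 1"
  by (simp add: weight_def)

lemma weight_snoc:
  assumes "q > 0" "s \<noteq> []"
  shows "weight q (s @ [a]) = weight q s * sqrt q * \<bar>cval q s\<bar>"
proof -
  obtain n where n: "length s = Suc n" using assms(2) by (cases s) auto
  have "q powr (real (Suc n) / 2) = q powr (real n / 2) * sqrt q"
    using assms by (simp add: add_divide_distrib powr_add powr_half_sqrt)
  then show ?thesis
    by (simp add: weight_def cval_def cseq_append n)
qed

lemma path_vec:
  assumes "q > 0" "is_path q s"
  shows "snd (vec q s) \<noteq> 0 \<and> cval q s = fst (vec q s) / snd (vec q s)
    \<and> weight q s = \<bar>snd (vec q s)\<bar> / sqrt q"
  using assms(2)
proof (induction s rule: rev_induct)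
  case Nil
  then show ?case by (simp add: is_path_def)
next
  case (snoc a s)
  show ?case
  proof (cases "s = []")
    case True
    then show ?thesis using assms(1) by (simp add: vec_singleton cval_def weight_singleton)
  next
    case False
    obtain x y where xy: "vec q s = (x, y)" by fastforce
    from snoc.prems False have "is_path q s" "cval q s \<noteq> 0" by (simp_all add: is_path_snoc)
    with snoc.IH xy have y: "y \<noteq> 0" "cval q s = x / y" "weight q s = \<bar>y\<bar> / sqrt q" by auto
    with \<open>cval q s \<noteq> 0\<close> have "x \<noteq> 0" by simp
    have "sqrt q * sqrt q = q" using assms(1) by simp
    with \<open>x \<noteq> 0\<close> \<open>y \<noteq> 0\<close> False assms(1) show ?thesis
      by (simp add: vec_snoc step_def xy cval_snoc weight_snoc y(2,3) field_simps abs_mult abs_divide)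
  qed
qed

lemma is_path_iff_vec:
  assumes "q > 0"
  shows "is_path q s \<longleftrightarrow> s \<noteq> [] \<and> (\<forall>k. 0 < k \<and> k < length s \<longrightarrow> fst (vec q (take k s)) \<noteq> 0)"
proof (induction s rule: rev_induct)
  case Nil
  then show ?case by (simp add: is_path_def)
next
  case (snoc a s)
  show ?case
  proof (cases "s = []")
    case True
    then show ?thesis by (auto simp: is_path_def)
  next
    case False
    have "cval q s \<noteq> 0 \<longleftrightarrow> fst (vec q s) \<noteq> 0" if "is_path q s"
      using path_vec[OF assms that] by auto
    with snoc.IH False show ?thesis
      by (auto simp: is_path_snoc less_Suc_eq)
  qed
qed

lemma is_loop_iff_vec: "q > 0 \<Longrightarrow> is_loop q s \<longleftrightarrow> is_path q s \<and> fst (vec q s) = 0"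
  using path_vec by (auto simp: is_loop_def)

lemma shortest_loop_prefix:
  assumes "q > 0" "0 < n" "n \<le> length s" "fst (vec q (take n s)) = 0"
  obtains k where "0 < k" "k \<le> n" "is_loop q (take k s)"
proof -
  obtain k where k: "k \<le> n" "\<forall>i<k. \<not> (0 < i \<and> fst (vec q (take i s)) = 0)"
      "0 < k" "fst (vec q (take k s)) = 0"
    using ex_least_nat_le[of "\<lambda>k. 0 < k \<and> fst (vec q (take k s)) = 0" n] assms by auto
  have "is_path q (take k s)"
    unfolding is_path_iff_vec[OF assms(1)]
  proof (intro conjI allI impI)
    show "take k s \<noteq> []" using k assms by auto
    fix i assume "0 < i \<and> i < length (take k s)"
    then have "0 < i" "i < k" by simp_all
    with k(2) show "fst (vec q (take i (take k s))) \<noteq> 0" by (auto simp: min_def)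
  qed
  with k have "is_loop q (take k s)"
    by (simp add: is_loop_iff_vec[OF assms(1)])
  with k that show thesis by blast
qed

lemma is_proper_iff: "is_proper m \<longleftrightarrow> 0 \<notin> set (butlast m)"
  by (auto simp: is_proper_def in_set_conv_nth nth_butlast)

lemma shorter_word_same_vec:
  assumes "q > 0" "0 \<in> set (butlast s)"
  obtains s' where "length s' < length s" "vec q s' = vec q s"
proof -
  obtain xs zs where "butlast s = xs @ 0 # zs"
    using split_list[OF assms(2)] by blast
  moreover obtain b rs where "zs @ [last s] = b # rs"
    by (cases "zs @ [last s]") auto
  moreover have "s = butlast s @ [last s]"
    using assms(2) by (cases s) auto
  ultimately have s: "s = xs @ 0 # b # rs" by simp
  show thesis
  proof (cases xs rule: rev_cases)
    case Nil
    with s that[of rs] show thesis by (simp add: vec_Cons_zero[OF assms(1)])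
  next
    case (snoc ys a)
    with s have "vec q (ys @ (a + b) # rs) = vec q s"
      using vec_merge_zero[OF assms(1)] by simp
    moreover have "length (ys @ (a + b) # rs) < length s"
      using s snoc by simp
    ultimately show thesis using that by blast
  qed
qed

lemma proper_loop_prefix:
  assumes q: "q > 0" and "0 \<notin> set (butlast s)" "2 \<le> length s" "snd (vec q s) = 0"
  obtains t a r where "s = t @ a # r" "is_loop q t" "is_proper t"
proof -
  have "s \<noteq> []" using assms(3) by auto
  then have "snd (vec q s) = sqrt q * fst (vec q (butlast s))"
    by (metis snd_vec_snoc append_butlast_last_id)
  with assms(4) q have "fst (vec q (take (length s - 1) s)) = 0"
    by (simp add: butlast_conv_take)
  moreover have "0 < length s - 1" "length s - 1 \<le> length s"
    using assms(3) by simp_all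
  ultimately obtain k where k: "0 < k" "k \<le> length s - 1" "is_loop q (take k s)"
    using shortest_loop_prefix[OF q] by blast
  then have "k < length s" by simp
  then have "butlast (take k s) = take (k - 1) (butlast s)"
    by (simp add: butlast_take take_butlast)
  with assms(2) have "is_proper (take k s)"
    by (auto simp: is_proper_iff dest: in_set_takeD)
  moreover have "s = take k s @ s ! k # drop (Suc k) s"
    using \<open>k < length s\<close> by (simp add: id_take_nth_drop)
  ultimately show thesis
    using that k(3) by blast
qed

lemma abs_fst_vec_eq_1:
  assumes q: "q > 0"
    and unit_loops: "\<forall>m. is_loop q m \<and> is_proper m \<longrightarrow> weight q m = 1"
    and "snd (vec q s) = 0"
  shows "\<bar>fst (vec q s)\<bar> = 1"
  using assms(3)
proof (induction "length s" arbitrary: s rule: less_induct)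
  case less
  consider "0 \<in> set (butlast s)" | "length s < 2" | "0 \<notin> set (butlast s)" "2 \<le> length s"
    by linarith
  then show ?case
  proof cases
    case 1
    with less show ?thesis by (metis shorter_word_same_vec[OF q])
  next
    case 2
    with less.prems q show ?thesis
      by (cases s) (auto simp: vec_def step_def)
  next
    case 3
    then obtain t a r where s: "s = t @ a # r" and t: "is_loop q t" "is_proper t"
      using proper_loop_prefix[OF q _ _ less.prems] by blast
    with unit_loops path_vec[OF q] have "\<bar>snd (vec q t)\<bar> = sqrt q" "fst (vec q t) = 0"
      by (auto simp: is_loop_def)
    with q s have "vec q s = (snd (vec q t) / sqrt q) *\<^sub>R vec q r"
      "\<bar>snd (vec q t) / sqrt q\<bar> = 1"
      by (simp_all add: vec_after_loop abs_divide)
    moreover have "length r < length s"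
      using s by simp
    ultimately show ?thesis
      using less by (auto simp: abs_mult)
  qed
qed

definition inverse_word :: "int list \<Rightarrow> int list" where
  "inverse_word s = concat (map (\<lambda>a. [0, - a, 0]) (rev s))"

lemma fold_inverse_word:
  assumes "q > 0"
  shows "fold (step q) (s @ inverse_word s) w = w"
proof (induction s arbitrary: w)
  case Nil
  then show ?case by (simp add: inverse_word_def)
next
  case (Cons a s)
  have "inverse_word (a # s) = inverse_word s @ [0, - a, 0]"
    by (simp add: inverse_word_def)
  with Cons.IH step_zero_cancel[OF assms] show ?case by simp
qed

lemma weight_unique_if_proper_loop_weights_eq_1:
  assumes q: "q > 0"
    and unit_loops: "\<forall>m. is_loop q m \<and> is_proper m \<longrightarrow> weight q m = 1"
  shows "weight_unique q"
  unfolding weight_unique_def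
proof (intro allI impI)
  fix m n assume mn: "is_path q m \<and> is_path q n \<and> cval q m = cval q n"
  obtain x y x' y' where xy: "vec q m = (x, y)" "vec q n = (x', y')" by fastforce
  with mn path_vec[OF q, of m] path_vec[OF q, of n]
  have "y \<noteq> 0" "y' \<noteq> 0" "x / y = x' / y'"
    and weights: "weight q m = \<bar>y\<bar> / sqrt q" "weight q n = \<bar>y'\<bar> / sqrt q"
    by auto
  define l where "l = y / y'"
  have "vec q m = l *\<^sub>R vec q n"
    using \<open>y \<noteq> 0\<close> \<open>y' \<noteq> 0\<close> \<open>x / y = x' / y'\<close> by (simp add: xy l_def field_simps)
  then have "vec q (m @ inverse_word n) = l *\<^sub>R (1, 0)"
    by (simp add: vec_def fold_step_scaleR fold_inverse_word[OF q, of n, simplified])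
  then have "\<bar>l\<bar> = 1"
    using abs_fst_vec_eq_1[OF q unit_loops, of "m @ inverse_word n"] by simp
  with \<open>y' \<noteq> 0\<close> show "weight q m = weight q n"
    by (simp add: weights l_def abs_divide)
qed

lemma loop_weight_eq_1_if_weight_unique:
  assumes "q > 0" "weight_unique q" "is_loop q m"
  shows "weight q m = 1"
proof -
  have "is_path q [0]" "cval q [0] = 0"
    by (simp_all add: is_path_def cval_def)
  moreover have "is_path q m" "cval q m = 0"
    using assms(3) by (simp_all add: is_loop_def)
  ultimately have "weight q m = weight q [0]"
    using assms(2) unfolding weight_unique_def by metis
  also have "\<dots> = 1"
    using assms(1) by (simp add: weight_singleton)
  finally show ?thesis .
qed

text \<open>The word m 0 n with the letters last m, 0, hd n merged into one.\<close>

definition join :: "int list \<Rightarrow> int list \<Rightarrow> int list" where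
  "join m n = butlast m @ (last m + hd n) # tl n"

lemma length_join: "m \<noteq> [] \<Longrightarrow> n \<noteq> [] \<Longrightarrow> length (join m n) = length m + length n - 1"
  by (cases m) (simp_all add: join_def)

lemma take_join_le:
  "k < length m \<Longrightarrow> take k (join m n) = take k m"
  by (simp add: join_def take_butlast)

lemma take_join_gt:
  "m \<noteq> [] \<Longrightarrow> 0 < j \<Longrightarrow> take (length m - 1 + j) (join m n) = join m (take j n)"
  by (cases j) (simp_all add: join_def take_tl)

lemma vec_join_loop:
  assumes "q > 0" "m \<noteq> []" "n \<noteq> []" "fst (vec q m) = 0"
  shows "vec q (join m n) = (snd (vec q m) / sqrt q) *\<^sub>R vec q n"
proof -
  have "vec q (join m n) = vec q (butlast m @ last m # 0 # hd n # tl n)"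
    by (simp add: join_def vec_merge_zero[OF assms(1)])
  also have "butlast m @ last m # 0 # hd n # tl n = m @ 0 # n"
    using assms(2,3) by simp
  finally show ?thesis
    using vec_after_loop[OF assms(4)] by simp
qed

lemma is_loop_join:
  assumes q: "q > 0" and "is_loop q m" "is_loop q n"
  shows "is_loop q (join m n)" "weight q (join m n) = weight q m * weight q n"
proof -
  define e where "e = snd (vec q m) / sqrt q"
  have m: "m \<noteq> []" "fst (vec q m) = 0" "\<forall>k. 0 < k \<and> k < length m \<longrightarrow> fst (vec q (take k m)) \<noteq> 0"
    using assms(2) by (simp_all add: is_loop_iff_vec[OF q] is_path_iff_vec[OF q])
  have n: "n \<noteq> []" "fst (vec q n) = 0" "\<forall>j. 0 < j \<and> j < length n \<longrightarrow> fst (vec q (take j n)) \<noteq> 0"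
    using assms(3) by (simp_all add: is_loop_iff_vec[OF q] is_path_iff_vec[OF q])
  have "e \<noteq> 0"
    using path_vec[OF q] assms(2) q by (simp add: e_def is_loop_def)
  have vec_join: "vec q (join m n') = e *\<^sub>R vec q n'" if "n' \<noteq> []" for n'
    using vec_join_loop[OF q m(1) that m(2)] by (simp add: e_def)
  have "fst (vec q (take k (join m n))) \<noteq> 0" if k: "0 < k" "k < length (join m n)" for k
  proof (cases "k < length m")
    case True
    with k m(3) show ?thesis by (simp add: take_join_le)
  next
    case False
    define j where "j = k - (length m - 1)"
    have "0 < j" "j < length n" "k = length m - 1 + j"
      using False k m(1) n(1) by (simp_all add: j_def length_join)
    then have "take k (join m n) = join m (take j n)"
      using take_join_gt[OF m(1)] by simp
    moreover have "take j n \<noteq> []" "fst (vec q (take j n)) \<noteq> 0"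
      using n \<open>0 < j\<close> \<open>j < length n\<close> by auto
    ultimately show ?thesis
      using \<open>e \<noteq> 0\<close> by (simp add: vec_join)
  qed
  moreover have "fst (vec q (join m n)) = 0"
    using n vec_join by simp
  ultimately show "is_loop q (join m n)"
    using m(1) by (simp add: is_loop_iff_vec[OF q] is_path_iff_vec[OF q] join_def)
  then show "weight q (join m n) = weight q m * weight q n"
    using path_vec[OF q] assms(2,3) vec_join[OF n(1)] q
    by (simp add: is_loop_def e_def abs_mult abs_divide)
qed

lemma is_proper_join:
  "is_proper m \<Longrightarrow> is_proper n \<Longrightarrow> last m + hd n \<noteq> 0 \<Longrightarrow> is_proper (join m n)"
  by (cases n) (auto simp: is_proper_iff join_def butlast_append dest: in_set_butlastD)

lemma is_loop_uminus:
  assumes q: "q > 0" and "is_loop q m"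
  shows "is_loop q (map uminus m)" "weight q (map uminus m) = weight q m"
proof -
  have "fst (vec q (map uminus t)) = 0 \<longleftrightarrow> fst (vec q t) = 0" for t
    by (simp add: vec_uminus)
  with assms show "is_loop q (map uminus m)"
    by (simp add: is_loop_iff_vec[OF q] is_path_iff_vec[OF q] take_map)
  with path_vec[OF q] assms show "weight q (map uminus m) = weight q m"
    by (simp add: is_loop_def vec_uminus abs_mult)
qed

lemma is_proper_uminus: "is_proper (map uminus m) \<longleftrightarrow> is_proper m"
  by (auto simp: is_proper_iff simp flip: map_butlast)

lemma join_partner:
  assumes q: "q > 0" and m: "is_loop q m" "is_proper m" and len: "2 \<le> length m"
  obtains n where "is_loop q n" "is_proper n" "weight q n = weight q m" "last m + hd n \<noteq> 0"
proof (cases "last m + hd m = 0")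
  case True
  obtain a b r where m_eq: "m = a # b # r"
    using len by (cases m; cases "tl m") auto
  with m(2) have "a \<noteq> 0"
    by (simp add: is_proper_iff)
  with True m_eq have "last m + hd (map uminus m) \<noteq> 0"
    by simp
  with that is_loop_uminus[OF q m(1)] m(2) show thesis
    by (simp add: is_proper_uminus)
qed (use m in blast)

lemma proper_loop_weight_eq_1_if_equal_weights:
  assumes q: "q > 0"
    and equal_weights: "\<forall>m n. is_loop q m \<and> is_proper m \<and> m \<noteq> trivial_loop \<and>
      is_loop q n \<and> is_proper n \<and> n \<noteq> trivial_loop \<longrightarrow> weight q m = weight q n"
    and m: "is_loop q m" "is_proper m"
  shows "weight q m = 1"
proof (cases "length m < 2")
  case True
  with m(1) obtain a where "m = [a]"
    by (cases m) (auto simp: is_loop_def is_path_def)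
  with q show ?thesis by (simp add: weight_singleton)
next
  case False
  then have "2 \<le> length m" by simp
  then obtain n where n: "is_loop q n" "is_proper n" "weight q n = weight q m" "last m + hd n \<noteq> 0"
    using join_partner[OF q m] by blast
  have "m \<noteq> []" "n \<noteq> []"
    using False n(1) by (auto simp: is_loop_def is_path_def)
  then have "length (join m n) \<ge> 2"
    using False by (cases n) (simp_all add: length_join)
  then have "m \<noteq> trivial_loop" "join m n \<noteq> trivial_loop"
    using False by (auto simp: trivial_loop_def)
  moreover have "is_loop q (join m n)" "weight q (join m n) = weight q m * weight q m"
    using is_loop_join[OF q m(1) n(1)] n(3) by simp_all
  moreover have "is_proper (join m n)"
    using is_proper_join m(2) n(2,4) by blast
  ultimately have "weight q m * weight q m = weight q m"
    using equal_weights m by metis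
  moreover have "weight q m \<noteq> 0"
    using path_vec[OF q] m(1) q by (simp add: is_loop_def)
  ultimately show ?thesis by simp
qed

theorem lemma4:
  fixes q :: real
  assumes "q > 0"
  shows "(weight_unique q \<longleftrightarrow> (\<forall>m. is_loop q m \<and> is_proper m \<longrightarrow> weight q m = 1))
       \<and> ((\<forall>m. is_loop q m \<and> is_proper m \<longrightarrow> weight q m = 1) \<longleftrightarrow>
          (\<forall>m n. is_loop q m \<and> is_proper m \<and> m \<noteq> trivial_loop \<and>
                 is_loop q n \<and> is_proper n \<and> n \<noteq> trivial_loop \<longrightarrow> weight q m = weight q n))"
  using loop_weight_eq_1_if_weight_unique[OF assms] weight_unique_if_proper_loop_weights_eq_1[OF assms]
    proper_loop_weight_eq_1_if_equal_weights[OF assms]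
  by (metis (no_types, lifting))

end
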